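(* Let $q$ be a distribution over $[n]$ and $x\in(0,1)$ with $\|q_{-x}\|_0>1$. Then there exists $i^*\in[n]$ such that, with $A=\{j\in[n]: q_j\le q_{i^*}\}$: (i) $\max_{j\in A}q_j=q_{i^*}$; (ii) $q(A)\ge x$; and (iii) $\dfrac{q(A)}{q_{i^*}}\ge\dfrac{\|q_{-x}\|_0-1}{\ln(1/x)}$.
   Context: For $x\ge0$, $q_{-x}$ is the vector obtained from $q$ by iteratively removing its smallest entries, stopping just before the total of the removed entries would exceed $x$. $\|v\|_0$ is the number of nonzero entries of $v$. $q(A)=\sum_{j\in A}q_j$. *)

theory Defs
  imports Complex_Main
begin

definition sorted_vals :: "(nat \<Rightarrow> real) \<Rightarrow> nat \<Rightarrow> real list" where
  "sorted_vals q n = sort (map q [1..<Suc n])"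

text \<open>Number of smallest entries removed when forming q_{-x}: remove entries in
  ascending order as long as the total removed does not exceed x.\<close>
definition num_removed :: "(nat \<Rightarrow> real) \<Rightarrow> nat \<Rightarrow> real \<Rightarrow> nat" where
  "num_removed q n x = Max {k. k \<le> n \<and> sum_list (take k (sorted_vals q n)) \<le> x}"

text \<open>The zero-norm of q_{-x}: number of nonzero entries that remain.\<close>
definition trunc_l0 :: "(nat \<Rightarrow> real) \<Rightarrow> nat \<Rightarrow> real \<Rightarrow> nat" where
  "trunc_l0 q n x = length (filter (\<lambda>v. v \<noteq> 0) (drop (num_removed q n x) (sorted_vals q n)))"

end

theory Submission imports Defs "HOL-Library.Multiset" begin

text \<open>Let \<open>s\<^sub>0 \<le> \<dots> \<le> s\<^sub>n\<^sub>-\<^sub>1\<close> be the sorted entries of \<open>q\<close>, \<open>S\<^sub>t = s\<^sub>0 + \<dots> + s\<^sub>t\<close>, and let \<open>k\<close> entries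
  be removed, so that \<open>S\<^sub>t > x\<close> for all \<open>t \<ge> k\<close>. Put \<open>d = n - k - 1 \<ge> \<parallel>q\<^sub>-\<^sub>x\<parallel>\<^sub>0 - 1\<close> and
  \<open>L = ln (1/x)\<close>. If every ratio \<open>S\<^sub>t / s\<^sub>t\<close> with \<open>t \<ge> k\<close> were below \<open>d / L\<close>, then
  \<open>S\<^sub>t\<^sub>-\<^sub>1 = S\<^sub>t - s\<^sub>t \<le> (1 - L/d) S\<^sub>t\<close>, and going down from \<open>S\<^sub>n\<^sub>-\<^sub>1 = 1\<close> gives
  \<open>S\<^sub>k \<le> (1 - L/d)\<^sup>d \<le> exp (-L) = x\<close>, a contradiction. The index \<open>i\<^sup>*\<close> is an entry with
  value \<open>s\<^sub>t\<close> for a good \<open>t\<close>; its set \<open>A\<close> contains the first \<open>t + 1\<close> sorted entries.\<close>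

lemma backward_geometric_decay:
  fixes S :: "nat \<Rightarrow> real"
  assumes "k \<le> m" and "0 \<le> r"
    and decay: "\<And>t. k < t \<Longrightarrow> t \<le> m \<Longrightarrow> S (t - 1) \<le> r * S t"
  shows "S k \<le> r ^ (m - k) * S m"
  using assms(1) decay
proof (induction m rule: dec_induct)
  case base
  then show ?case by simp
next
  case (step m)
  have "S k \<le> r ^ (m - k) * S m" using step by simp
  also have "\<dots> \<le> r ^ (m - k) * (r * S (Suc m))"
    using step.prems[of "Suc m"] step.hyps \<open>0 \<le> r\<close> by (intro mult_left_mono) auto
  also have "\<dots> = r ^ (Suc m - k) * S (Suc m)"
    using step.hyps by (simp add: Suc_diff_le)
  finally show ?case .
qed

lemma exists_prefix_sum_ratio_ge:
  fixes g :: "nat \<Rightarrow> real"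
  assumes nonneg: "\<And>i. i < n \<Longrightarrow> 0 \<le> g i"
    and total: "(\<Sum>i<n. g i) = 1"
    and pos: "\<And>t. k \<le> t \<Longrightarrow> t < n \<Longrightarrow> 0 < g t"
    and above: "x < (\<Sum>i\<le>k. g i)"
    and "k < n" and "0 < x" and "x < 1"
  shows "\<exists>t. k \<le> t \<and> t < n \<and> real (n - k - 1) / ln (1 / x) \<le> (\<Sum>i\<le>t. g i) / g t"
proof (rule ccontr)
  assume no_good_t: "\<not> ?thesis"
  define S where "S t = (\<Sum>i\<le>t. g i)" for t
  define L where "L = ln (1 / x)"
  define d where "d = real (n - k - 1)"
  have "0 < L" using \<open>0 < x\<close> \<open>x < 1\<close> by (simp add: L_def)
  have small: "L * S t < d * g t" if "k \<le> t" "t < n" for t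
  proof -
    have "S t / g t < d / L" using no_good_t that by (auto simp: S_def d_def L_def)
    then show ?thesis using pos[OF that] \<open>0 < L\<close> by (simp add: field_simps)
  qed
  have "g k \<le> S k"
    unfolding S_def using nonneg \<open>k < n\<close> by (intro member_le_sum) auto
  then have "d * g k \<le> d * S k" by (simp add: d_def mult_left_mono)
  then have "L * S k < d * S k" using small[of k] \<open>k < n\<close> by simp
  moreover have "0 < S k" using above \<open>0 < x\<close> by (simp add: S_def)
  ultimately have "L < d" by simp
  define r where "r = 1 - L / d"
  have "0 \<le> r" using \<open>L < d\<close> \<open>0 < L\<close> by (simp add: r_def)
  have "S (t - 1) \<le> r * S t" if "k < t" "t \<le> n - 1" for t
  proof -
    have "S t = S (t - 1) + g t" using that by (cases t) (auto simp: S_def)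
    moreover have "L / d * S t < g t"
      using small[of t] that \<open>0 < L\<close> \<open>L < d\<close> by (simp add: field_simps)
    ultimately show ?thesis by (simp add: r_def algebra_simps)
  qed
  then have "S k \<le> r ^ (n - 1 - k) * S (n - 1)"
    using \<open>k < n\<close> \<open>0 \<le> r\<close> by (intro backward_geometric_decay) auto
  also have "S (n - 1) = 1"
    using total \<open>k < n\<close> by (simp add: S_def atMost_atLeast0 atLeast0LessThan[symmetric]
      atLeastLessThanSuc_atLeastAtMost[symmetric])
  also have "r ^ (n - 1 - k) \<le> exp (- L / d) ^ (n - 1 - k)"
    using \<open>0 \<le> r\<close> exp_ge_add_one_self[of "- L / d"] by (intro power_mono) (auto simp: r_def)
  also have "\<dots> = exp (- L)"
    using \<open>0 < L\<close> \<open>L < d\<close> by (simp add: exp_of_nat_mult[symmetric] d_def)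
  also have "\<dots> = x" using \<open>0 < x\<close> by (simp add: L_def ln_div)
  finally show False using above by (simp add: S_def)
qed

lemma sum_list_take_Suc_eq_sum_nth:
  fixes s :: "real list"
  assumes "t < length s"
  shows "sum_list (take (Suc t) s) = (\<Sum>i\<le>t. s ! i)"
proof -
  have "sum_list (take (Suc t) s) = (\<Sum>i<Suc t. take (Suc t) s ! i)"
    using assms by (simp add: sum_list_sum_nth atLeast0LessThan min_absorb2)
  also have "\<dots> = (\<Sum>i\<le>t. s ! i)" by (simp add: lessThan_Suc_atMost)
  finally show ?thesis .
qed

lemma sorted_in_set_take_Suc_le_nth:
  assumes "sorted s" and "t < length s" and "v \<in> set (take (Suc t) s)"
  shows "v \<le> s ! t"
proof -
  obtain j where "j \<le> t" and "v = s ! j"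
    using assms(2,3) by (auto simp: in_set_conv_nth less_Suc_eq_le)
  then show ?thesis using assms(1,2) by (simp add: sorted_nth_mono)
qed

lemma sorted_nth_pos_if_sum_list_take_pos:
  fixes s :: "real list"
  assumes "sorted s" and "t < length s" and "0 < sum_list (take (Suc t) s)"
  shows "0 < s ! t"
proof (rule ccontr)
  assume "\<not> 0 < s ! t"
  then have "sum_list (take (Suc t) s) \<le> 0"
    using sorted_in_set_take_Suc_le_nth[OF assms(1,2)] by (force intro: sum_list_nonpos)
  then show False using assms(3) by simp
qed

lemma sum_list_take_Suc_le_sum_list_filter:
  fixes s :: "real list"
  assumes "sorted s" and "t < length s" and "\<forall>v\<in>set s. 0 \<le> v"
  shows "sum_list (take (Suc t) s) \<le> sum_list (filter (\<lambda>v. v \<le> s ! t) s)"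
proof -
  have "filter (\<lambda>v. v \<le> s ! t) (take (Suc t) s) = take (Suc t) s"
    using sorted_in_set_take_Suc_le_nth[OF assms(1,2)] by simp
  moreover have "0 \<le> sum_list (filter (\<lambda>v. v \<le> s ! t) (drop (Suc t) s))"
    using assms(3) by (intro sum_list_nonneg) (auto dest: in_set_dropD)
  ultimately show ?thesis by (metis append_take_drop_id filter_append sum_list_append le_add_same_cancel1)
qed

lemma length_sorted_vals [simp]: "length (sorted_vals q n) = n"
  by (simp add: sorted_vals_def)

lemma sorted_sorted_vals [simp]: "sorted (sorted_vals q n)"
  by (simp add: sorted_vals_def)

lemma set_sorted_vals [simp]: "set (sorted_vals q n) = q ` {1..n}"
  by (auto simp: sorted_vals_def)

lemma sum_list_filter_sorted_vals:
  "sum_list (filter P (sorted_vals q n)) = (\<Sum>j | j \<in> {1..n} \<and> P (q j). q j)"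
proof -
  have "sum_list (filter P (sorted_vals q n)) = sum_list (filter P (map q [1..<Suc n]))"
    unfolding sorted_vals_def by (metis mset_filter mset_sort sum_mset_sum_list)
  also have "\<dots> = sum_list (map q (filter (P \<circ> q) [1..<Suc n]))"
    by (simp add: filter_map)
  also have "\<dots> = sum q (set (filter (P \<circ> q) [1..<Suc n]))"
    by (simp add: sum_list_distinct_conv_sum_set)
  also have "set (filter (P \<circ> q) [1..<Suc n]) = {j. j \<in> {1..n} \<and> P (q j)}"
    by auto
  finally show ?thesis .
qed

lemma sum_list_sorted_vals: "sum_list (sorted_vals q n) = (\<Sum>j\<in>{1..n}. q j)"
proof -
  have "sum_list (sorted_vals q n) = sum_list (filter (\<lambda>_. True) (sorted_vals q n))" by simp
  also have "\<dots> = (\<Sum>j | j \<in> {1..n} \<and> True. q j)" by (rule sum_list_filter_sorted_vals)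
  also have "{j. j \<in> {1..n} \<and> True} = {1..n}" by auto
  finally show ?thesis .
qed

lemma finite_num_removed_candidates:
  "finite {k. k \<le> n \<and> sum_list (take k (sorted_vals q n)) \<le> x}"
  by (rule finite_subset[of _ "{..n}"]) auto

lemma less_sum_list_take_sorted_vals:
  assumes "num_removed q n x < j" and "j \<le> n"
  shows "x < sum_list (take j (sorted_vals q n))"
proof (rule ccontr)
  assume "\<not> x < sum_list (take j (sorted_vals q n))"
  then have "j \<le> num_removed q n x"
    unfolding num_removed_def using assms(2) by (intro Max_ge finite_num_removed_candidates) auto
  then show False using assms(1) by simp
qed

lemma trunc_l0_le: "trunc_l0 q n x \<le> n - num_removed q n x"
  unfolding trunc_l0_def using length_filter_le by (metis length_drop length_sorted_vals)

lemma exists_sorted_prefix_ratio_ge: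
  fixes s :: "real list"
  assumes "sorted s" and nonneg: "\<forall>v\<in>set s. 0 \<le> v" and total: "sum_list s = 1"
    and "0 < x" and "x < 1" and "k < length s"
    and above: "\<And>t. k \<le> t \<Longrightarrow> t < length s \<Longrightarrow> x < sum_list (take (Suc t) s)"
  shows "\<exists>t. k \<le> t \<and> t < length s \<and> 0 < s ! t \<and> x < sum_list (take (Suc t) s) \<and>
    real (length s - k - 1) / ln (1 / x) \<le> sum_list (take (Suc t) s) / s ! t"
proof -
  have pos: "0 < s ! t" if "k \<le> t" "t < length s" for t
    using sorted_nth_pos_if_sum_list_take_pos[OF \<open>sorted s\<close>] above[OF that] that \<open>0 < x\<close> by simp
  have "0 \<le> s ! i" if "i < length s" for i
    using that nonneg by simp
  moreover have "(\<Sum>i<length s. s ! i) = 1"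
    using total by (simp add: sum_list_sum_nth atLeast0LessThan)
  ultimately obtain t where "k \<le> t" "t < length s"
    and "real (length s - k - 1) / ln (1 / x) \<le> (\<Sum>i\<le>t. s ! i) / s ! t"
    using exists_prefix_sum_ratio_ge[of "length s" "(!) s" k x] pos above[of k] assms(4-6)
    by (auto simp: sum_list_take_Suc_eq_sum_nth)
  then show ?thesis using above pos by (auto simp: sum_list_take_Suc_eq_sum_nth)
qed

lemma sum_list_take_sorted_vals_le_sum_below:
  assumes "\<forall>j\<in>{1..n}. 0 \<le> q j" and "t < n" and "q i = sorted_vals q n ! t"
  shows "sum_list (take (Suc t) (sorted_vals q n)) \<le> (\<Sum>j\<in>{j\<in>{1..n}. q j \<le> q i}. q j)"
  using sum_list_take_Suc_le_sum_list_filter[of "sorted_vals q n" t]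
    sum_list_filter_sorted_vals[of "\<lambda>v. v \<le> q i" q n] assms
  by auto

theorem lemmaC3:
  fixes q :: "nat \<Rightarrow> real" and n :: nat and x :: real
  assumes "\<forall>j\<in>{1..n}. q j \<ge> 0"
    and "(\<Sum>j\<in>{1..n}. q j) = 1"
    and "0 < x" and "x < 1"
    and "trunc_l0 q n x > 1"
  shows "\<exists>i\<in>{1..n}. (let A = {j\<in>{1..n}. q j \<le> q i} in
            Max (q ` A) = q i \<and> (\<Sum>j\<in>A. q j) \<ge> x \<and>
            (\<Sum>j\<in>A. q j) / q i \<ge> (real (trunc_l0 q n x) - 1) / ln (1 / x))"
proof -
  define s where "s = sorted_vals q n"
  define k where "k = num_removed q n x"
  have "real (trunc_l0 q n x) - 1 \<le> real (n - k - 1)" and "k < n"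
    using trunc_l0_le[of q n x] assms(5) by (auto simp: k_def)
  moreover have "x < sum_list (take (Suc t) s)" if "k \<le> t" "t < n" for t
    using less_sum_list_take_sorted_vals[of q n x "Suc t"] that by (simp add: s_def k_def)
  ultimately obtain t where t: "t < n" "0 < s ! t" "x < sum_list (take (Suc t) s)"
    and ratio: "real (n - k - 1) / ln (1 / x) \<le> sum_list (take (Suc t) s) / s ! t"
    using exists_sorted_prefix_ratio_ge[of s x k] assms(1-4) sum_list_sorted_vals[of q n]
    by (fastforce simp: s_def)
  obtain i where i: "i \<in> {1..n}" "q i = s ! t"
    using t nth_mem[of t s] by (auto simp: s_def)
  define A where "A = {j\<in>{1..n}. q j \<le> q i}"
  have "i \<in> A" using i by (simp add: A_def)
  then have "Max (q ` A) = q i" by (intro Max_eqI) (auto simp: A_def)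
  moreover have prefix_le: "sum_list (take (Suc t) s) \<le> (\<Sum>j\<in>A. q j)"
    using sum_list_take_sorted_vals_le_sum_below[OF assms(1)] t i by (simp add: s_def A_def)
  moreover have "(real (trunc_l0 q n x) - 1) / ln (1 / x) \<le> real (n - k - 1) / ln (1 / x)"
    using \<open>real (trunc_l0 q n x) - 1 \<le> real (n - k - 1)\<close> assms(3,4) by (intro divide_right_mono) auto
  moreover have "sum_list (take (Suc t) s) / s ! t \<le> (\<Sum>j\<in>A. q j) / q i"
    using prefix_le t i by (simp add: divide_right_mono)
  ultimately show ?thesis using i t ratio unfolding Let_def A_def by fastforce
qed

end
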